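(* Let $A,B,C$ be non-collinear points of the real affine plane. Let $A^{+},A^{-}$ be points on line $\overleftrightarrow{BC}$, let $B^{+},B^{-}$ be points on line $\overleftrightarrow{CA}$, and let $C^{+},C^{-}$ be points on line $\overleftrightarrow{AB}$, with $A^{+}\neq C$, $A^{-}\neq B$, $B^{+}\neq A$, $B^{-}\neq C$, $C^{+}\neq B$, $C^{-}\neq A$. Define the real numbers $$a^{+}=\frac{|BA^{+}|}{|A^{+}C|},\quad b^{+}=\frac{|CB^{+}|}{|B^{+}A|},\quad c^{+}=\frac{|AC^{+}|}{|C^{+}B|},\quad a^{-}=\frac{|CA^{-}|}{|A^{-}B|},\quad b^{-}=\frac{|AB^{-}|}{|B^{-}C|},\quad c^{-}=\frac{|BC^{-}|}{|C^{-}A|}.$$ Then (under these hypotheses $B^{+}\neq C^{-}$, $C^{+}\neq A^{-}$, $A^{+}\neq B^{-}$, so the lines below are well defined) the three lines $\overleftrightarrow{B^{+}C^{-}}$, $\overleftrightarrow{C^{+}A^{-}}$, $\overleftrightarrow{A^{+}B^{-}}$ pass through a common point of the projective plane (i.e. they are concurrent at a finite point, or are mutually parallel) if and only if $$a^{+}b^{+}c^{+}+a^{-}b^{-}c^{-}=1-a^{+}a^{-}-b^{+}b^{-}-c^{+}c^{-}.$$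
   Context: Segment lengths are signed: for distinct points $P,Q,R$ on one of the lines $\overleftrightarrow{AB}$, $\overleftrightarrow{BC}$, $\overleftrightarrow{CA}$, $|PQ|$ denotes the signed length, positive when $\overrightarrow{PQ}$ points in the direction of $\overrightarrow{AB}$, $\overrightarrow{BC}$, $\overrightarrow{CA}$ respectively; ratios $|PX|/|XQ|$ of collinear signed lengths are thus well-defined real numbers, with $|PP|/|PQ|=0$. Equivalently, e.g. $A^{+}=(B+a^{+}C)/(1+a^{+})$ and $A^{-}=(a^{-}B+C)/(1+a^{-})$ as vectors, and similarly for the other points. *)

theory Defs
  imports "HOL-Analysis.Analysis"
begin

type_synonym point = "real ^ 2"

text \<open>Signed ratio |PX|/|XQ| of collinear signed lengths: the unique real t with
  X - P = t (Q - X) (well defined for X \<noteq> Q and P, X, Q collinear).\<close>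
definition sratio :: "point \<Rightarrow> point \<Rightarrow> point \<Rightarrow> real" where
  "sratio P X Q = (THE t. X - P = t *\<^sub>R (Q - X))"

definition line :: "point \<Rightarrow> point \<Rightarrow> point set" where
  "line P Q = affine hull {P, Q}"

definition proj_concurrent ::
  "point \<Rightarrow> point \<Rightarrow> point \<Rightarrow> point \<Rightarrow> point \<Rightarrow> point \<Rightarrow> bool" where
  "proj_concurrent P1 Q1 P2 Q2 P3 Q3 \<longleftrightarrow>
     (\<exists>X. X \<in> line P1 Q1 \<and> X \<in> line P2 Q2 \<and> X \<in> line P3 Q3) \<or>
     (collinear {0, Q1 - P1, Q2 - P2} \<and> collinear {0, Q2 - P2, Q3 - P3}
      \<and> collinear {0, Q1 - P1, Q3 - P3})"

end

theory Submission
  imports Defs "HOL-Analysis.Cross3"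
begin

text \<open>Work in homogeneous coordinates: a point P becomes (P1, P2, 1), a direction w the point
  at infinity (w1, w2, 0), and the line through P and Q has coordinate vector hP \<times> hQ. Three
  lines pass through a common point of the projective plane iff their coordinate vectors have a
  common nonzero orthogonal vector, i.e. iff their triple product vanishes. A point X dividing PQ
  in the ratio t satisfies (1 + t) hX = hP + t hQ, so up to nonzero factors the three lines are
  (hC + bp hA) \<times> (hB + cm hA) and its cyclic shifts, and a polynomial identity shows that
  their triple product is [hA, hB, hC]^2 (ap bp cp + am bm cm - 1 + ap am + bp bm + cp cm),
  where [hA, hB, hC] \<noteq> 0 because A, B, C are not collinear.\<close>

unbundle cross3_syntax

definition hcoord :: "point \<Rightarrow> real^3" where
  "hcoord P = vector [P$1, P$2, 1]"

definition hdir :: "real^2 \<Rightarrow> real^3" where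
  "hdir w = vector [w$1, w$2, 0]"

lemma hcoord_nonzero: "hcoord P \<noteq> 0"
  by (auto simp: hcoord_def vec_eq_iff forall_3)

lemma hdir_eq_0_iff: "hdir w = 0 \<longleftrightarrow> w = 0"
  by (auto simp: hdir_def vec_eq_iff forall_3 forall_2)

lemma collinear_0_iff_det2:
  fixes u v :: "real^2"
  shows "collinear {0, u, v} \<longleftrightarrow> u$1 * v$2 = u$2 * v$1"
proof
  assume "collinear {0, u, v}"
  then show "u$1 * v$2 = u$2 * v$1" unfolding collinear_lemma by auto
next
  assume det: "u$1 * v$2 = u$2 * v$1"
  show "collinear {0, u, v}" unfolding collinear_lemma
  proof (cases "u = 0")
    case False
    then consider "u$1 \<noteq> 0" | "u$2 \<noteq> 0" by (metis exhaust_2 vec_eq_iff zero_index)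
    then have "\<exists>c. v = c *\<^sub>R u"
    proof cases
      case 1
      then have "v = (v$1 / u$1) *\<^sub>R u" using det by (auto simp: vec_eq_iff forall_2 field_simps)
      then show ?thesis by blast
    next
      case 2
      then have "v = (v$2 / u$2) *\<^sub>R u" using det by (auto simp: vec_eq_iff forall_2 field_simps)
      then show ?thesis by blast
    qed
    then show "u = 0 \<or> v = 0 \<or> (\<exists>c. v = c *\<^sub>R u)" by blast
  qed simp
qed

lemma cross_hcoord_inner_hcoord:
  "(hcoord P \<times> hcoord Q) \<bullet> hcoord X = 0 \<longleftrightarrow> collinear {0, Q - P, X - P}"
  unfolding collinear_0_iff_det2
  by (simp add: hcoord_def cross3_def inner_vec_def sum_3 algebra_simps)

lemma cross_hcoord_inner_hdir:
  "(hcoord P \<times> hcoord Q) \<bullet> hdir w = 0 \<longleftrightarrow> collinear {0, Q - P, w}"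
  unfolding collinear_0_iff_det2
  by (simp add: hcoord_def hdir_def cross3_def inner_vec_def sum_3 algebra_simps)

lemma mem_line_iff_hcoord:
  assumes "P \<noteq> Q"
  shows "X \<in> line P Q \<longleftrightarrow> (hcoord P \<times> hcoord Q) \<bullet> hcoord X = 0"
proof -
  have "X \<in> line P Q \<longleftrightarrow> collinear {X, P, Q}"
    unfolding line_def using collinear_3_affine_hull [OF assms, of X] by (simp add: insert_commute)
  also have "\<dots> \<longleftrightarrow> collinear {0, X - P, Q - P}"
    by (rule collinear_3) simp
  finally show ?thesis by (simp add: cross_hcoord_inner_hcoord insert_commute)
qed

lemma triple_product_eq_0_iff:
  fixes u v w :: "real^3"
  shows "u \<bullet> (v \<times> w) = 0 \<longleftrightarrow> (\<exists>x. x \<noteq> 0 \<and> u \<bullet> x = 0 \<and> v \<bullet> x = 0 \<and> w \<bullet> x = 0)"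
proof -
  define M :: "real^3^3" where "M = vector [u, v, w]"
  have "M *v x = 0 \<longleftrightarrow> u \<bullet> x = 0 \<and> v \<bullet> x = 0 \<and> w \<bullet> x = 0" for x
    unfolding M_def vec_eq_iff forall_3 by (simp add: matrix_vector_mult_def inner_vec_def sum_3)
  moreover have "u \<bullet> (v \<times> w) = 0 \<longleftrightarrow> (\<exists>x. x \<noteq> 0 \<and> M *v x = 0)"
    unfolding dot_cross_det M_def [symmetric]
    by (metis invertible_det_nz invertible_left_inverse matrix_left_invertible_ker)
  ultimately show ?thesis by simp
qed

lemma proj_concurrent_iff_common_hpoint:
  assumes "P1 \<noteq> Q1" "P2 \<noteq> Q2" "P3 \<noteq> Q3"
  shows "proj_concurrent P1 Q1 P2 Q2 P3 Q3 \<longleftrightarrow>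
    (\<exists>x. x \<noteq> 0 \<and> (hcoord P1 \<times> hcoord Q1) \<bullet> x = 0 \<and> (hcoord P2 \<times> hcoord Q2) \<bullet> x = 0
      \<and> (hcoord P3 \<times> hcoord Q3) \<bullet> x = 0)"
    (is "_ \<longleftrightarrow> (\<exists>x. x \<noteq> 0 \<and> ?on x)")
proof
  assume "proj_concurrent P1 Q1 P2 Q2 P3 Q3"
  then consider X where "X \<in> line P1 Q1" "X \<in> line P2 Q2" "X \<in> line P3 Q3"
    | "collinear {0, Q1 - P1, Q2 - P2}" "collinear {0, Q2 - P2, Q3 - P3}"
      "collinear {0, Q1 - P1, Q3 - P3}"
    unfolding proj_concurrent_def by blast
  then show "\<exists>x. x \<noteq> 0 \<and> ?on x"
  proof cases
    case (1 X)
    then have "?on (hcoord X)" using assms by (simp add: mem_line_iff_hcoord)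
    then show ?thesis using hcoord_nonzero by blast
  next
    case 2
    then have "?on (hdir (Q1 - P1))"
      by (simp add: cross_hcoord_inner_hdir insert_commute)
    moreover have "hdir (Q1 - P1) \<noteq> 0" using assms(1) by (simp add: hdir_eq_0_iff)
    ultimately show ?thesis by blast
  qed
next
  assume "\<exists>x. x \<noteq> 0 \<and> ?on x"
  then obtain x where "x \<noteq> 0" "?on x" by blast
  show "proj_concurrent P1 Q1 P2 Q2 P3 Q3"
  proof (cases "x$3 = 0")
    case False
    define X :: point where "X = vector [x$1 / x$3, x$2 / x$3]"
    have "hcoord X = (1 / x$3) *\<^sub>R x"
      using False by (simp add: X_def hcoord_def vec_eq_iff forall_3)
    then have "?on (hcoord X)" using \<open>?on x\<close> by simp
    then show ?thesis
      using assms unfolding proj_concurrent_def by (auto simp: mem_line_iff_hcoord)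
  next
    case True
    define w :: "real^2" where "w = vector [x$1, x$2]"
    have "hdir w = x" using True by (simp add: w_def hdir_def vec_eq_iff forall_3)
    then have "w \<noteq> 0" "?on (hdir w)" using \<open>x \<noteq> 0\<close> \<open>?on x\<close> by (auto simp: hdir_eq_0_iff)
    then have par: "collinear {0, Q1 - P1, w}" "collinear {0, Q2 - P2, w}" "collinear {0, Q3 - P3, w}"
      by (simp_all add: cross_hcoord_inner_hdir)
    have "collinear {0, d, d'}" if "collinear {0, d, w}" "collinear {0, d', w}" for d d'
      using collinear_3_trans [of d 0 w d'] that \<open>w \<noteq> 0\<close> by (metis insert_commute)
    then show ?thesis unfolding proj_concurrent_def using par by blast
  qed
qed

lemma line_commute: "line P Q = line Q P"
  unfolding line_def by (simp add: insert_commute)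

lemma sratio_eq:
  assumes "X \<in> line P Q" "X \<noteq> Q"
  shows "X - P = sratio P X Q *\<^sub>R (Q - X)"
proof -
  obtain u where u: "X = P + u *\<^sub>R (Q - P)"
    using assms(1) unfolding line_def affine_hull_2_alt by blast
  have "u \<noteq> 1" using u assms(2) by auto
  have "Q - X = (1 - u) *\<^sub>R (Q - P)" using u by (simp add: algebra_simps)
  then have ratio: "X - P = (u / (1 - u)) *\<^sub>R (Q - X)" using u \<open>u \<noteq> 1\<close> by simp
  have "sratio P X Q = u / (1 - u)"
    unfolding sratio_def
  proof (rule the_equality)
    fix t assume "X - P = t *\<^sub>R (Q - X)"
    with ratio assms(2) show "t = u / (1 - u)" by (metis eq_iff_diff_eq_0 scaleR_cancel_right)
  qed (rule ratio)
  with ratio show ?thesis by simp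
qed

lemma sratio_neq_minus_1:
  assumes "P \<noteq> Q" "X \<in> line P Q" "X \<noteq> Q"
  shows "1 + sratio P X Q \<noteq> 0"
proof
  assume "1 + sratio P X Q = 0"
  then have "X - P = X - Q" using sratio_eq [OF assms(2,3)] by (simp add: eq_neg_iff_add_eq_0 [symmetric])
  with assms(1) show False by simp
qed

lemma hcoord_sratio:
  assumes "X \<in> line P Q" "X \<noteq> Q"
  shows "(1 + sratio P X Q) *\<^sub>R hcoord X = hcoord P + sratio P X Q *\<^sub>R hcoord Q"
proof -
  let ?t = "sratio P X Q"
  have "X$i - P$i = ?t * (Q$i - X$i)" for i
    using arg_cong [OF sratio_eq [OF assms], of "\<lambda>v. v$i"] by simp
  from this [of 1] this [of 2] show ?thesis
    by (simp add: hcoord_def vec_eq_iff forall_3 algebra_simps)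
qed

lemma cross_hcoord_sratio:
  assumes "X \<in> line P Q" "X \<noteq> Q" "Y \<in> line P' Q'" "Y \<noteq> Q'"
  shows "((1 + sratio P X Q) * (1 + sratio P' Y Q')) *\<^sub>R (hcoord X \<times> hcoord Y)
    = (hcoord P + sratio P X Q *\<^sub>R hcoord Q) \<times> (hcoord P' + sratio P' Y Q' *\<^sub>R hcoord Q')"
  by (simp add: hcoord_sratio [OF assms(1,2), symmetric] hcoord_sratio [OF assms(3,4), symmetric]
      cross_mult_left cross_mult_right)

lemma triple_product_scaleR:
  fixes u v w :: "real^3"
  shows "(r *\<^sub>R u) \<bullet> ((s *\<^sub>R v) \<times> (t *\<^sub>R w)) = r * s * t * (u \<bullet> (v \<times> w))"
  by (simp add: cross_mult_left cross_mult_right)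

lemma lines_through_vertex_meet:
  assumes "\<not> collinear {A, B, C}" "X \<in> line A B" "X \<in> line A C"
  shows "X = A"
proof (rule ccontr)
  assume "X \<noteq> A"
  have "A \<noteq> B" "A \<noteq> C" using assms(1) by (auto simp: insert_commute)
  then have "collinear {A, B, X}" "collinear {A, C, X}"
    using assms(2,3) by (simp_all add: collinear_3_affine_hull line_def)
  then have "collinear {B, A, X}" "collinear {A, X, C}" by (simp_all add: insert_commute)
  then have "collinear {B, A, C}" using collinear_3_trans \<open>X \<noteq> A\<close> by blast
  with assms(1) show False by (simp add: insert_commute)
qed

lemma triple_product_hcoord_neq_0:
  assumes "\<not> collinear {A, B, C}"
  shows "(hcoord A \<times> hcoord B) \<bullet> hcoord C \<noteq> 0"
proof -
  have "A \<noteq> B" using assms by auto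
  moreover have "C \<notin> line A B"
    using assms by (simp add: collinear_3_affine_hull [OF \<open>A \<noteq> B\<close>] line_def)
  ultimately show ?thesis by (simp add: mem_line_iff_hcoord)
qed

lemma triple_product_cevian_lines:
  fixes a b c :: "real^3" and ap bp cp am bm cm :: real
  shows "((c + bp *\<^sub>R a) \<times> (b + cm *\<^sub>R a))
      \<bullet> (((a + cp *\<^sub>R b) \<times> (c + am *\<^sub>R b)) \<times> ((b + ap *\<^sub>R c) \<times> (a + bm *\<^sub>R c)))
    = ((a \<times> b) \<bullet> c)\<^sup>2 * (ap * bp * cp + am * bm * cm - 1 + ap * am + bp * bm + cp * cm)"
  unfolding cross3_def inner_vec_def sum_3 by (simp add: power2_eq_square) algebra

theorem theorem3:
  fixes A B C Ap Am Bp Bm Cp Cm :: point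
  assumes ncol: "\<not> collinear {A, B, C}"
    and onA: "Ap \<in> line B C" "Am \<in> line B C"
    and onB: "Bp \<in> line C A" "Bm \<in> line C A"
    and onC: "Cp \<in> line A B" "Cm \<in> line A B"
    and ne: "Ap \<noteq> C" "Am \<noteq> B" "Bp \<noteq> A" "Bm \<noteq> C" "Cp \<noteq> B" "Cm \<noteq> A"
  defines "ap \<equiv> sratio B Ap C" and "bp \<equiv> sratio C Bp A" and "cp \<equiv> sratio A Cp B"
    and "am \<equiv> sratio C Am B" and "bm \<equiv> sratio A Bm C" and "cm \<equiv> sratio B Cm A"
  shows "Bp \<noteq> Cm \<and> Cp \<noteq> Am \<and> Ap \<noteq> Bm \<and>
    (proj_concurrent Bp Cm Cp Am Ap Bm \<longleftrightarrow>
      ap * bp * cp + am * bm * cm = 1 - ap * am - bp * bm - cp * cm)"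
proof -
  have ncol': "\<not> collinear {B, A, C}" "\<not> collinear {C, B, A}" using ncol by (simp_all add: insert_commute)
  have "A \<noteq> B" "B \<noteq> C" "C \<noteq> A" using ncol by (auto simp: insert_commute)
  have onA': "Am \<in> line C B" and onB': "Bm \<in> line A C" and onC': "Cm \<in> line B A"
    using onA(2) onB(2) onC(2) by (simp_all add: line_commute)
  have distinct: "Bp \<noteq> Cm" "Cp \<noteq> Am" "Ap \<noteq> Bm"
    using lines_through_vertex_meet [OF ncol onC(2)] lines_through_vertex_meet [OF ncol'(1) _ onA(2)]
      lines_through_vertex_meet [OF ncol'(2) _ onB(2)] onA(1) onB(1) onC(1) ne(2,4,6)
    by (auto simp: line_commute)
  have "1 + ap \<noteq> 0" "1 + bp \<noteq> 0" "1 + cp \<noteq> 0" "1 + am \<noteq> 0" "1 + bm \<noteq> 0" "1 + cm \<noteq> 0"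
    unfolding ap_def bp_def cp_def am_def bm_def cm_def using onA(1) onB(1) onC(1) onA' onB' onC' ne
      \<open>A \<noteq> B\<close> \<open>B \<noteq> C\<close> \<open>C \<noteq> A\<close> by (simp_all add: sratio_neq_minus_1)
  then have scale: "(1 + bp) * (1 + cm) * ((1 + cp) * (1 + am)) * ((1 + ap) * (1 + bm)) \<noteq> 0" by simp
  have "((1 + bp) * (1 + cm) * ((1 + cp) * (1 + am)) * ((1 + ap) * (1 + bm)))
      * ((hcoord Bp \<times> hcoord Cm) \<bullet> ((hcoord Cp \<times> hcoord Am) \<times> (hcoord Ap \<times> hcoord Bm)))
    = ((hcoord A \<times> hcoord B) \<bullet> hcoord C)\<^sup>2 * (ap * bp * cp + am * bm * cm - 1 + ap * am + bp * bm + cp * cm)"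
    unfolding triple_product_scaleR [symmetric] ap_def bp_def cp_def am_def bm_def cm_def
      cross_hcoord_sratio [OF onB(1) ne(3) onC' ne(6)] cross_hcoord_sratio [OF onC(1) ne(5) onA' ne(2)]
      cross_hcoord_sratio [OF onA(1) ne(1) onB' ne(4)]
    by (rule triple_product_cevian_lines)
  then have "(hcoord Bp \<times> hcoord Cm) \<bullet> ((hcoord Cp \<times> hcoord Am) \<times> (hcoord Ap \<times> hcoord Bm)) = 0
      \<longleftrightarrow> ap * bp * cp + am * bm * cm = 1 - ap * am - bp * bm - cp * cm"
    using scale triple_product_hcoord_neq_0 [OF ncol] by auto
  then show ?thesis
    using distinct by (simp add: proj_concurrent_iff_common_hpoint triple_product_eq_0_iff)
qed

end
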